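(* Let $\mathcal T(W)$ be the directed unweighted graph on $\mathcal V$ having an edge from $i$ to $j$ if and only if $w_{ij}>\tfrac12$. Then $\mathcal V$ is the only non-empty cohesive subset of $\mathcal V$ if and only if the edges of $\mathcal T(W)$ form a single directed cycle that traverses all the nodes of $\mathcal V$.
   Context: Let $n\ge1$, $\mathcal V=\{1,\dots,n\}$, and let $W=(w_{ij})$ be an $n\times n$ row-stochastic matrix (nonnegative entries, each row summing to $1$), viewed as the weighted adjacency matrix of a directed graph on $\mathcal V$. A set $\mathcal M\subseteq\mathcal V$ is cohesive if $\sum_{j\in\mathcal M}w_{ij}\ge\tfrac12$ for every $i\in\mathcal M$. *)

theory Defs
  imports Complex_Main
begin

text \<open>The node set V is the finite type 'a (V = UNIV, nonempty, so n \<ge> 1).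
  W is an n x n matrix given as a function of two node indices.\<close>

definition row_stochastic :: "('a::finite \<Rightarrow> 'a \<Rightarrow> real) \<Rightarrow> bool" where
  "row_stochastic W \<longleftrightarrow> (\<forall>i j. W i j \<ge> 0) \<and> (\<forall>i. (\<Sum>j\<in>UNIV. W i j) = 1)"

definition cohesive :: "('a::finite \<Rightarrow> 'a \<Rightarrow> real) \<Rightarrow> 'a set \<Rightarrow> bool" where
  "cohesive W M \<longleftrightarrow> (\<forall>i\<in>M. (\<Sum>j\<in>M. W i j) \<ge> 1/2)"

definition T_edges :: "('a \<Rightarrow> 'a \<Rightarrow> real) \<Rightarrow> ('a \<times> 'a) set" where
  "T_edges W = {(i, j). W i j > 1/2}"

text \<open>An edge set forms a single directed cycle traversing all nodes: there is an
  enumeration v_0,...,v_{n-1} of all nodes (without repetition) such that the edges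
  are exactly v_k -> v_{(k+1) mod n}. (For n = 1 this is a self-loop.)\<close>
definition is_hamiltonian_cycle_edges :: "('a \<times> 'a) set \<Rightarrow> bool" where
  "is_hamiltonian_cycle_edges E \<longleftrightarrow>
     (\<exists>xs. distinct xs \<and> set xs = UNIV \<and>
        E = {(xs ! k, xs ! ((k + 1) mod length xs)) | k. k < length xs})"

end

theory Submission
  imports Defs "HOL-Combinatorics.Orbits"
begin

text \<open>Since every row of W sums to 1, each node has at most one heavy out-edge (weight above 1/2),
  and a cohesive set M is closed under heavy edges: a heavy edge leaving M would leave less than 1/2
  of the row inside M. Hence if T(W) is a Hamiltonian cycle, every non-empty cohesive set is V.
  Conversely, if V is the only non-empty cohesive set, then V - {j} is not cohesive, which yields a
  heavy edge into every node j; as out-edges are unique, the heavy in-edges define an injective,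
  hence bijective, map, so T(W) is the graph of a function s. The orbit of any node under s is
  cohesive, hence all of V, and a function with a single orbit covering V has a Hamiltonian cycle
  as its graph.\<close>

lemma row_stochastic_sum_Compl_singleton:
  fixes W :: "'a::finite \<Rightarrow> 'a \<Rightarrow> real"
  assumes "row_stochastic W"
  shows "(\<Sum>j\<in>- {t}. W i j) = 1 - W i t"
  using assms by (simp add: Compl_eq_Diff_UNIV sum_diff1 row_stochastic_def)

lemma row_stochastic_heavy_unique:
  fixes W :: "'a::finite \<Rightarrow> 'a \<Rightarrow> real"
  assumes "row_stochastic W" and "W i j > 1/2" and "W i k > 1/2"
  shows "j = k"
proof (rule ccontr)
  assume "j \<noteq> k"
  then have "W i j + W i k = (\<Sum>x\<in>{j, k}. W i x)" by simp
  also have "\<dots> \<le> (\<Sum>x\<in>UNIV. W i x)"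
    using assms(1) by (intro sum_mono2) (auto simp: row_stochastic_def)
  also have "\<dots> = 1" using assms(1) by (simp add: row_stochastic_def)
  finally show False using assms(2,3) by linarith
qed

lemma cohesive_T_edges_closed:
  fixes W :: "'a::finite \<Rightarrow> 'a \<Rightarrow> real"
  assumes "row_stochastic W" and "cohesive W M"
  shows "T_edges W `` M \<subseteq> M"
proof
  fix t assume "t \<in> T_edges W `` M"
  then obtain i where i: "i \<in> M" and heavy: "W i t > 1/2" by (auto simp: T_edges_def)
  show "t \<in> M"
  proof (rule ccontr)
    assume "t \<notin> M"
    then have "(\<Sum>j\<in>M. W i j) \<le> (\<Sum>j\<in>- {t}. W i j)"
      using assms(1) by (intro sum_mono2) (auto simp: row_stochastic_def)
    also have "\<dots> = 1 - W i t" using assms(1) by (rule row_stochastic_sum_Compl_singleton)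
    finally show False using assms(2) i heavy by (auto simp: cohesive_def)
  qed
qed

lemma cohesiveI_heavy_successor:
  fixes W :: "'a::finite \<Rightarrow> 'a \<Rightarrow> real"
  assumes "\<And>i j. 0 \<le> W i j" and "\<And>i. i \<in> M \<Longrightarrow> \<exists>j\<in>M. W i j \<ge> 1/2"
  shows "cohesive W M"
  unfolding cohesive_def
proof
  fix i assume "i \<in> M"
  then obtain j where "j \<in> M" and "W i j \<ge> 1/2" using assms(2) by blast
  moreover have "W i j \<le> (\<Sum>k\<in>M. W i k)"
    using \<open>j \<in> M\<close> assms(1) by (intro member_le_sum) auto
  ultimately show "(\<Sum>k\<in>M. W i k) \<ge> 1/2" by linarith
qed

lemma exists_heavy_in_edge:
  fixes W :: "'a::finite \<Rightarrow> 'a \<Rightarrow> real"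
  assumes "row_stochastic W" and "\<forall>M. M \<noteq> {} \<and> cohesive W M \<longrightarrow> M = UNIV"
  shows "\<exists>i. W i j > 1/2"
proof (cases "- {j} = ({} :: 'a set)")
  case True
  then have "UNIV = {j}" by auto
  then have "(\<Sum>x\<in>UNIV. W j x) = (\<Sum>x\<in>{j}. W j x)" by (rule arg_cong)
  then have "W j j = 1" using assms(1) by (simp add: row_stochastic_def)
  then show ?thesis by (intro exI[of _ j]) simp
next
  case False
  moreover have "- {j} \<noteq> UNIV" by auto
  ultimately have "\<not> cohesive W (- {j})" using assms(2)[rule_format, of "- {j}"] by blast
  then obtain i where "(\<Sum>x\<in>- {j}. W i x) < 1/2" by (auto simp: cohesive_def not_le)
  then show ?thesis using row_stochastic_sum_Compl_singleton[OF assms(1)] by auto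
qed

lemma T_edges_eq_graph:
  fixes W :: "'a::finite \<Rightarrow> 'a \<Rightarrow> real"
  assumes "row_stochastic W" and "\<And>j. \<exists>i. W i j > 1/2"
  shows "\<exists>s. T_edges W = range (\<lambda>i. (i, s i))"
proof -
  obtain p where p: "\<And>j. W (p j) j > 1/2" using assms(2) by metis
  have "inj p" by (rule injI) (metis p row_stochastic_heavy_unique[OF assms(1)])
  then have "bij p" by (simp add: bij_def finite_UNIV_inj_surj)
  have heavy_inv: "W i (inv p i) > 1/2" for i
    using p[of "inv p i"] \<open>bij p\<close> by (simp add: bij_is_surj surj_f_inv_f)
  have "T_edges W = range (\<lambda>i. (i, inv p i))"
  proof (intro set_eqI iffI)
    fix e assume "e \<in> T_edges W"
    then obtain i j where e: "e = (i, j)" and "W i j > 1/2" by (auto simp: T_edges_def)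
    then have "j = inv p i" using heavy_inv row_stochastic_heavy_unique[OF assms(1)] by blast
    then show "e \<in> range (\<lambda>i. (i, inv p i))" using e by simp
  next
    fix e assume "e \<in> range (\<lambda>i. (i, inv p i))"
    then show "e \<in> T_edges W" using heavy_inv by (auto simp: T_edges_def)
  qed
  then show ?thesis by auto
qed

lemma hamiltonian_cycle_graph_of_single_orbit:
  fixes s :: "'a::finite \<Rightarrow> 'a"
  assumes orbit: "orbit s v = UNIV"
  shows "is_hamiltonian_cycle_edges (range (\<lambda>i. (i, s i)))"
proof -
  have self: "v \<in> orbit s v" using orbit by simp
  define m where "m = funpow_dist1 s v v"
  define xs where "xs = map (\<lambda>n. (s ^^ n) v) [0..<m]"
  have period: "(s ^^ m) v = v" unfolding m_def using self by (rule funpow_dist1_prop)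
  have length: "length xs = m" by (simp add: xs_def)
  have distinct: "distinct xs"
    unfolding xs_def m_def distinct_map set_upt using inj_on_funpow_dist1[OF self] distinct_upt by blast
  have "set xs = orbit s v"
    unfolding xs_def m_def set_map set_upt by (rule orbit_conv_funpow_dist1[OF self, symmetric])
  then have set: "set xs = UNIV" using orbit by simp
  have edges: "range (\<lambda>i. (i, s i)) = {(xs ! k, xs ! ((k + 1) mod length xs)) | k. k < length xs}"
  proof -
    have next_elem: "xs ! ((k + 1) mod m) = s (xs ! k)" if "k < m" for k
    proof -
      have "xs ! ((k + 1) mod m) = (s ^^ ((k + 1) mod m)) v" using that by (simp add: xs_def)
      also have "\<dots> = (s ^^ (k + 1)) v" using period that by (simp add: funpow_mod_eq)
      finally show ?thesis using that by (simp add: xs_def)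
    qed
    show ?thesis
    proof (intro set_eqI iffI)
      fix e assume "e \<in> range (\<lambda>i. (i, s i))"
      then obtain i where e: "e = (i, s i)" by blast
      obtain k where "k < m" "i = xs ! k" using set length by (metis UNIV_I in_set_conv_nth)
      then show "e \<in> {(xs ! k, xs ! ((k + 1) mod length xs)) | k. k < length xs}"
        using e next_elem length by auto
    next
      fix e assume "e \<in> {(xs ! k, xs ! ((k + 1) mod length xs)) | k. k < length xs}"
      then show "e \<in> range (\<lambda>i. (i, s i))" using next_elem length by auto
    qed
  qed
  show ?thesis
    unfolding is_hamiltonian_cycle_edges_def by (intro exI[of _ xs] conjI distinct set edges)
qed

lemma hamiltonian_cycle_edges_rtrancl:
  assumes "is_hamiltonian_cycle_edges E"
  shows "(x, y) \<in> E\<^sup>*"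
proof -
  obtain xs where set: "set xs = UNIV"
    and E: "E = {(xs ! k, xs ! ((k + 1) mod length xs)) | k. k < length xs}"
    using assms unfolding is_hamiltonian_cycle_edges_def by blast
  define L where "L = length xs"
  have "L > 0" using set by (auto simp: L_def)
  have walk: "(xs ! k, xs ! ((k + d) mod L)) \<in> E\<^sup>*" if "k < L" for k d
  proof (induction d)
    case 0
    then show ?case using that by simp
  next
    case (Suc d)
    have "(xs ! ((k + d) mod L), xs ! (((k + d) mod L + 1) mod L)) \<in> E"
      using \<open>L > 0\<close> by (auto simp: E L_def)
    then show ?case using Suc.IH by (simp add: mod_Suc_eq rtrancl_into_rtrancl)
  qed
  obtain k j where "k < L" "j < L" and x: "x = xs ! k" and y: "y = xs ! j"
    using set by (metis L_def UNIV_I in_set_conv_nth)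
  then have "(k + (j + L - k)) mod L = j" by simp
  then show ?thesis using walk[OF \<open>k < L\<close>, of "j + L - k"] x y by (simp only:)
qed

lemma cohesive_orbit:
  fixes W :: "'a::finite \<Rightarrow> 'a \<Rightarrow> real"
  assumes "row_stochastic W" and E: "T_edges W = range (\<lambda>i. (i, s i))"
  shows "cohesive W (orbit s v)"
proof (rule cohesiveI_heavy_successor)
  show "0 \<le> W i j" for i j using assms(1) by (simp add: row_stochastic_def)
  have "(i, s i) \<in> T_edges W" for i unfolding E by (rule rangeI)
  then have heavy: "W i (s i) > 1/2" for i by (simp add: T_edges_def)
  show "\<exists>j\<in>orbit s v. W i j \<ge> 1/2" if "i \<in> orbit s v" for i
    by (intro bexI[of _ "s i"] less_imp_le heavy orbit.step that)
qed

lemma hamiltonian_cycle_cohesive_eq_UNIV: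
  fixes W :: "'a::finite \<Rightarrow> 'a \<Rightarrow> real"
  assumes "row_stochastic W" and "is_hamiltonian_cycle_edges (T_edges W)"
    and "cohesive W M" and "x \<in> M"
  shows "M = UNIV"
proof -
  have "UNIV \<subseteq> (T_edges W)\<^sup>* `` M"
    using hamiltonian_cycle_edges_rtrancl[OF assms(2), of x] \<open>x \<in> M\<close> by blast
  also have "\<dots> = M"
    by (rule Image_closed_trancl[OF cohesive_T_edges_closed[OF assms(1,3)]])
  finally show ?thesis by blast
qed

theorem proposition1:
  fixes W :: "'a::finite \<Rightarrow> 'a \<Rightarrow> real"
  assumes "row_stochastic W"
  shows "(\<forall>M. M \<noteq> {} \<and> cohesive W M \<longrightarrow> M = UNIV) \<longleftrightarrow>
         is_hamiltonian_cycle_edges (T_edges W)"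
proof
  assume only_UNIV: "\<forall>M. M \<noteq> {} \<and> cohesive W M \<longrightarrow> M = UNIV"
  obtain s where E: "T_edges W = range (\<lambda>i. (i, s i))"
    using T_edges_eq_graph[OF assms exists_heavy_in_edge[OF assms only_UNIV]] by blast
  fix v
  have "orbit s v = UNIV"
    by (intro mp[OF spec[OF only_UNIV]] conjI orbit_nonempty cohesive_orbit[OF assms E])
  then show "is_hamiltonian_cycle_edges (T_edges W)"
    unfolding E by (rule hamiltonian_cycle_graph_of_single_orbit)
next
  assume cycle: "is_hamiltonian_cycle_edges (T_edges W)"
  show "\<forall>M. M \<noteq> {} \<and> cohesive W M \<longrightarrow> M = UNIV"
  proof (intro allI impI)
    fix M assume "M \<noteq> {} \<and> cohesive W M"
    then obtain x where "x \<in> M" and "cohesive W M" by auto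
    then show "M = UNIV" by (intro hamiltonian_cycle_cohesive_eq_UNIV[OF assms cycle])
  qed
qed

end
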